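(* Let $N\ge1$, fix a time $t_k$, and let $\mu_i(t_k)\in\mathbb{R}$, $\sigma_i(t_k)>0$ for $i\in\{1,\dots,N\}$, $\sigma_{\min}^2(t_k)=\min_i\sigma_i^2(t_k)$ and $\gamma(t_k)\in[0,1)$. Let $C(t_k),A_1(t_k),\dots,A_N(t_k)$ be independent with $C(t_k)\sim\mathcal{N}(0,\sigma_{\min}^2(t_k)|\gamma(t_k)|)$ and $A_i(t_k)\sim\mathcal{N}(\mu_i(t_k),\sigma_i^2(t_k)-\sigma_{\min}^2(t_k)|\gamma(t_k)|)$, set $\widetilde q_i(t_k)=C(t_k)+A_i(t_k)$ and $\widetilde M(t_k)=\max(0,\widetilde q_1(t_k),\dots,\widetilde q_N(t_k))$. Then for every $i\in\{1,\dots,N\}$, $$\mathbb{P}\bigl[\widetilde M(t_k)=\widetilde q_i(t_k)\bigr]=\int_{\mathbb{R}} f_{A_i(t_k)}(x)\,F_{C(t_k)}(x)\prod_{j=1,\,j\neq i}^N F_{A_j(t_k)}(x)\,dx,$$ where $f_{A_i(t_k)}$ is the density of $A_i(t_k)$ and $F_{C(t_k)}$, $F_{A_j(t_k)}$ are the cumulative distribution functions of $C(t_k)$ and $A_j(t_k)$.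
   Context: $(\widetilde q_1(t_k),\dots,\widetilde q_N(t_k))$ is the common factor approximation and $\widetilde M(t_k)$ the common factor maximum; if $\gamma(t_k)=0$ then $C(t_k)$ is the constant $0$ and $F_{C(t_k)}(x)=\mathbf{1}_{\{x\ge0\}}$. *)

theory Defs
  imports "HOL-Probability.Probability"
begin

definition gauss_measure :: "real \<Rightarrow> real \<Rightarrow> real measure" where
  "gauss_measure m v =
     (if v = 0 then return borel m else density lborel (normal_density m (sqrt v)))"

end

(*
  The common factor C cancels from the comparisons
  C + A_j <= C + A_i, so C + A_i attains the maximum iff C >= -A_i and A_j <= A_i for
  every j /= i. Conditioning on A_i = y, which by independence is Fubini on the product
  of the laws, the conditional probability of this event factorises as
  P(C >= -y) * prod_{j /= i} P(A_j <= y), and the centred Gaussian C is symmetric, so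
  P(C >= -y) = F_C(y). Since gamma < 1, A_i has positive variance and hence a density, and
  integrating against it gives the formula.
*)
theory Submission
  imports Defs
begin

lemma (in finite_borel_measure) emeasure_atMost_eq_cdf: "emeasure M {..x} = ennreal (cdf M x)"
  by (simp add: cdf_def emeasure_eq_measure)

lemma (in finite_borel_measure) borel_measurable_cdf: "cdf M \<in> borel_measurable borel"
  by (intro borel_measurable_mono monoI cdf_nondecreasing)

lemma cdf_product_bounded:
  assumes "\<And>j. j \<in> J \<Longrightarrow> real_distribution (D j)"
  shows "(\<lambda>x. \<Prod>j\<in>J. cdf (D j) x) \<in> borel_measurable borel"
    and "0 \<le> (\<Prod>j\<in>J. cdf (D j) x)" and "(\<Prod>j\<in>J. cdf (D j) x) \<le> 1"
proof -
  have D: "finite_borel_measure (D j)" if "j \<in> J" for j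
    using assms[OF that] by (rule real_distribution.finite_borel_measure_M)
  show "(\<lambda>x. \<Prod>j\<in>J. cdf (D j) x) \<in> borel_measurable borel"
    using D by (intro borel_measurable_prod finite_borel_measure.borel_measurable_cdf)
  show "0 \<le> (\<Prod>j\<in>J. cdf (D j) x)"
    using D by (intro prod_nonneg finite_borel_measure.cdf_nonneg)
  show "(\<Prod>j\<in>J. cdf (D j) x) \<le> 1"
    using assms D
    by (intro prod_le_1 conjI finite_borel_measure.cdf_nonneg real_distribution.cdf_bounded_prob)
qed

lemma emeasure_centered_gauss_atLeast_uminus:
  assumes "0 \<le> v"
  shows "emeasure (gauss_measure 0 v) {-y..} = emeasure (gauss_measure 0 v) {..y}"
proof (cases "v = 0")
  case True
  then show ?thesis by (simp add: gauss_measure_def emeasure_return indicator_def)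
next
  case False
  let ?f = "\<lambda>x. ennreal (normal_density 0 (sqrt v) x) * indicator {-y..} x"
  have "emeasure (gauss_measure 0 v) {-y..} = (\<integral>\<^sup>+x. ?f x \<partial>lborel)"
    using False by (simp add: gauss_measure_def emeasure_density)
  also have "\<dots> = (\<integral>\<^sup>+x. ?f (- x) \<partial>lborel)"
    using nn_integral_real_affine[of ?f "-1" 0] by simp
  also have "\<dots> = (\<integral>\<^sup>+x. ennreal (normal_density 0 (sqrt v) x) * indicator {..y} x \<partial>lborel)"
    by (intro nn_integral_cong) (auto simp: normal_density_def indicator_def)
  also have "\<dots> = emeasure (gauss_measure 0 v) {..y}"
    using False by (simp add: gauss_measure_def emeasure_density)
  finally show ?thesis .
qed

lemma nn_integral_density_eq_integral_bounded:
  fixes f g :: "'a \<Rightarrow> real"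
  assumes f: "integrable N f" "\<And>x. 0 \<le> f x"
    and g: "g \<in> borel_measurable N" "\<And>x. 0 \<le> g x" "\<And>x. g x \<le> 1"
  shows "(\<integral>\<^sup>+x. ennreal (g x) \<partial>density N f) = ennreal (\<integral>x. f x * g x \<partial>N)"
proof -
  have "integrable N (\<lambda>x. f x * g x)"
    using f g by (intro Bochner_Integration.integrable_bound[OF f(1)]) (auto intro!: mult_left_le)
  moreover have "(\<integral>\<^sup>+x. ennreal (g x) \<partial>density N f) = (\<integral>\<^sup>+x. ennreal (f x * g x) \<partial>N)"
    using f g by (simp add: nn_integral_density ennreal_mult)
  ultimately show ?thesis
    using f g by (simp add: nn_integral_eq_integral)
qed

lemma sets_PiM_Collect_component_pairs:
  assumes "finite J" "J \<subseteq> I" "i \<in> I"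
    and P: "\<And>j. j \<in> J \<Longrightarrow> Measurable.pred (M j \<Otimes>\<^sub>M M i) (\<lambda>(x, y). P j x y)"
  shows "{f \<in> space (PiM I M). \<forall>j\<in>J. P j (f j) (f i)} \<in> sets (PiM I M)"
proof -
  have "Measurable.pred (PiM I M) (\<lambda>f. P j (f j) (f i))" if "j \<in> J" for j
  proof -
    have "(\<lambda>f. (f j, f i)) \<in> measurable (PiM I M) (M j \<Otimes>\<^sub>M M i)"
      using assms that by (intro measurable_Pair measurable_component_singleton) auto
    from measurable_compose[OF this P[OF that]] show ?thesis
      by simp
  qed
  then show ?thesis
    using \<open>finite J\<close> by measurable
qed

lemma (in product_sigma_finite) emeasure_PiM_condition_on_one:
  assumes J: "finite J" "i \<notin> J"
    and P: "\<And>j. j \<in> J \<Longrightarrow> Measurable.pred (M j \<Otimes>\<^sub>M M i) (\<lambda>(x, y). P j x y)"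
  shows "emeasure (PiM (insert i J) M) {f \<in> space (PiM (insert i J) M). \<forall>j\<in>J. P j (f j) (f i)} =
    (\<integral>\<^sup>+y. (\<Prod>j\<in>J. emeasure (M j) {x \<in> space (M j). P j x y}) \<partial>M i)"
proof -
  define S where "S = {f \<in> space (PiM (insert i J) M). \<forall>j\<in>J. P j (f j) (f i)}"
  have S: "S \<in> sets (PiM (insert i J) M)"
    unfolding S_def using J P by (intro sets_PiM_Collect_component_pairs) auto
  have "emeasure (PiM (insert i J) M) S = (\<integral>\<^sup>+f. indicator S f \<partial>PiM (insert i J) M)"
    using S by simp
  also have "\<dots> = (\<integral>\<^sup>+y. (\<integral>\<^sup>+x. indicator S (x(i := y)) \<partial>PiM J M) \<partial>M i)"
    using S J by (intro product_nn_integral_insert_rev) auto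
  also have "\<dots> = (\<integral>\<^sup>+y. (\<Prod>j\<in>J. emeasure (M j) {x \<in> space (M j). P j x y}) \<partial>M i)"
  proof (intro nn_integral_cong)
    fix y assume y: "y \<in> space (M i)"
    define B where "B j = {x \<in> space (M j). P j x y}" for j
    have B: "B j \<in> sets (M j)" if "j \<in> J" for j
      using measurable_compose[OF measurable_Pair2'[OF y] P[OF that]] by (simp add: B_def pred_def)
    have "indicator S (x(i := y)) = (indicator (PiE J B) x :: ennreal)"
      if x: "x \<in> space (PiM J M)" for x
    proof -
      have "x(i := y) \<in> space (PiM (insert i J) M)"
        using x y by (auto simp: space_PiM PiE_def extensional_def)
      moreover have "x \<in> PiE J B \<longleftrightarrow> (\<forall>j\<in>J. P j (x j) y)"
        using x by (auto simp: B_def space_PiM PiE_def)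
      ultimately show ?thesis
        using J(2) by (auto simp: S_def indicator_def)
    qed
    then have "(\<integral>\<^sup>+x. indicator S (x(i := y)) \<partial>PiM J M) =
        (\<integral>\<^sup>+x. indicator (PiE J B) x \<partial>PiM J M)"
      by (intro nn_integral_cong)
    also have "\<dots> = emeasure (PiM J M) (PiE J B)"
      using B J by (intro nn_integral_indicator sets_PiM_I_finite) auto
    also have "\<dots> = (\<Prod>j\<in>J. emeasure (M j) (B j))"
      using B J by (intro emeasure_PiM) auto
    finally show "(\<integral>\<^sup>+x. indicator S (x(i := y)) \<partial>PiM J M) = (\<Prod>j\<in>J. emeasure (M j) (B j))" .
  qed
  finally show ?thesis
    unfolding S_def .
qed

lemma (in prob_space) emeasure_indep_vars_condition_on_one:
  fixes X :: "'i \<Rightarrow> 'a \<Rightarrow> 'b" and P :: "'i \<Rightarrow> 'b \<Rightarrow> 'b \<Rightarrow> bool"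
  assumes indep: "indep_vars M' X I" and I: "finite I" "i \<in> I"
    and P: "\<And>j. j \<in> I - {i} \<Longrightarrow> Measurable.pred (M' j \<Otimes>\<^sub>M M' i) (\<lambda>(x, y). P j x y)"
  shows "emeasure M {\<omega> \<in> space M. \<forall>j\<in>I - {i}. P j (X j \<omega>) (X i \<omega>)} =
    (\<integral>\<^sup>+y. (\<Prod>j\<in>I - {i}. emeasure (distr M (M' j) (X j)) {x \<in> space (M' j). P j x y})
       \<partial>distr M (M' i) (X i))"
proof -
  have rv: "\<And>j. j \<in> I \<Longrightarrow> random_variable (M' j) (X j)"
    using indep by (simp add: indep_vars_def)
  \<comment> \<open>Only the factors indexed by I matter; the point mass elsewhere just makes D a
    product of probability spaces.\<close>
  define D where
    "D j = (if j \<in> I then distr M (M' j) (X j) else return (count_space UNIV) undefined)" for j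
  interpret D: product_prob_space D
    by (intro product_prob_spaceI) (auto simp: D_def rv prob_space_distr prob_space_return)
  have sets_D: "sets (D j) = sets (M' j)" if "j \<in> I" for j
    using that by (simp add: D_def)
  have sets_PiM_D: "sets (PiM I D) = sets (PiM I M')"
    using sets_D by (intro sets_PiM_cong) auto
  let ?X = "\<lambda>\<omega>. \<lambda>j\<in>I. X j \<omega>"
  have X_meas: "?X \<in> measurable M (PiM I D)"
    using rv sets_PiM_D by (simp add: measurable_restrict cong: measurable_cong_sets)
  have "distr M (PiM I D) ?X = distr M (PiM I M') ?X"
    using sets_PiM_D by (intro distr_cong) auto
  also have "\<dots> = PiM I (\<lambda>j. distr M (M' j) (X j))"
    using indep rv I by (subst indep_vars_iff_distr_eq_PiM'[symmetric]) auto
  also have "\<dots> = PiM I D"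
    by (intro PiM_cong) (auto simp: D_def)
  finally have joint: "distr M (PiM I D) ?X = PiM I D" .
  have P_D: "Measurable.pred (D j \<Otimes>\<^sub>M D i) (\<lambda>(x, y). P j x y)" if "j \<in> I - {i}" for j
  proof -
    have sets_eq: "sets (D j \<Otimes>\<^sub>M D i) = sets (M' j \<Otimes>\<^sub>M M' i)"
      using that I sets_D by (intro sets_pair_measure_cong) auto
    show ?thesis
      unfolding measurable_cong_sets[OF sets_eq refl] using P[OF that] .
  qed
  define S where "S = {f \<in> space (PiM I D). \<forall>j\<in>I - {i}. P j (f j) (f i)}"
  have S_meas: "S \<in> sets (PiM I D)"
    unfolding S_def using I P_D by (intro sets_PiM_Collect_component_pairs) auto
  have "{\<omega> \<in> space M. \<forall>j\<in>I - {i}. P j (X j \<omega>) (X i \<omega>)} = ?X -` S \<inter> space M"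
    using measurable_space[OF X_meas] I by (auto simp: S_def)
  then have "emeasure M {\<omega> \<in> space M. \<forall>j\<in>I - {i}. P j (X j \<omega>) (X i \<omega>)} = emeasure (PiM I D) S"
    using emeasure_distr[OF X_meas S_meas] joint by simp
  also have "\<dots> = (\<integral>\<^sup>+y. (\<Prod>j\<in>I - {i}. emeasure (D j) {x \<in> space (D j). P j x y}) \<partial>D i)"
    using D.emeasure_PiM_condition_on_one[of "I - {i}" i P] P_D I
    by (simp add: S_def insert_absorb)
  also have "\<dots> = (\<integral>\<^sup>+y. (\<Prod>j\<in>I - {i}. emeasure (distr M (M' j) (X j)) {x \<in> space (M' j). P j x y})
       \<partial>distr M (M' i) (X i))"
  proof -
    have "D i = distr M (M' i) (X i)"
      using I by (simp add: D_def)
    then show ?thesis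
      by (auto simp: D_def intro!: nn_integral_cong prod.cong)
  qed
  finally show ?thesis .
qed

lemma Max_insert_zero_shift_eq_iff:
  fixes a :: "'i \<Rightarrow> 'b::linordered_ab_group_add"
  assumes "finite J" "i \<in> J"
  shows "Max (insert 0 ((\<lambda>j. c + a j) ` J)) = c + a i \<longleftrightarrow>
    0 \<le> c + a i \<and> (\<forall>j\<in>J - {i}. a j \<le> a i)"
  using assms by (subst Max_eq_iff) auto

lemma (in prob_space) emeasure_common_factor_attains_max:
  fixes C :: "'a \<Rightarrow> real" and A :: "nat \<Rightarrow> 'a \<Rightarrow> real"
  assumes indep: "indep_vars (\<lambda>_. borel) (\<lambda>j. if j = 0 then C else A j) {0..N}"
    and i: "i \<in> {1..N}"
    and C_symmetric: "\<And>y. emeasure (distr M borel C) {-y..} = emeasure (distr M borel C) {..y}"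
  shows "emeasure M
      {\<omega> \<in> space M. Max (insert 0 ((\<lambda>j. C \<omega> + A j \<omega>) ` {1..N})) = C \<omega> + A i \<omega>} =
    (\<integral>\<^sup>+y. ennreal (cdf (distr M borel C) y * (\<Prod>j\<in>{1..N} - {i}. cdf (distr M borel (A j)) y))
       \<partial>distr M borel (A i))"
proof -
  define X where "X j = (if j = 0 then C else A j)" for j
  define P :: "nat \<Rightarrow> real \<Rightarrow> real \<Rightarrow> bool" where
    "P j x y = (if j = 0 then 0 \<le> x + y else x \<le> y)" for j x y
  have X_i: "X i = A i"
    using i by (simp add: X_def)
  have others: "{0..N} - {i} = insert 0 ({1..N} - {i})" "0 \<notin> {1..N} - {i}"
    using i by auto
  have "Max (insert 0 ((\<lambda>j. C \<omega> + A j \<omega>) ` {1..N})) = C \<omega> + A i \<omega> \<longleftrightarrow>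
      (\<forall>j\<in>{0..N} - {i}. P j (X j \<omega>) (X i \<omega>))" for \<omega>
    using Max_insert_zero_shift_eq_iff[where J="{1..N}" and c="C \<omega>" and a="\<lambda>j. A j \<omega>"] i
    unfolding others by (auto simp: P_def X_def)
  then have "emeasure M
      {\<omega> \<in> space M. Max (insert 0 ((\<lambda>j. C \<omega> + A j \<omega>) ` {1..N})) = C \<omega> + A i \<omega>} =
      emeasure M {\<omega> \<in> space M. \<forall>j\<in>{0..N} - {i}. P j (X j \<omega>) (X i \<omega>)}"
    by simp
  also have "\<dots> = (\<integral>\<^sup>+y. (\<Prod>j\<in>{0..N} - {i}. emeasure (distr M borel (X j)) {x \<in> space borel. P j x y})
      \<partial>distr M borel (X i))"
  proof (rule emeasure_indep_vars_condition_on_one)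
    show "indep_vars (\<lambda>_. borel) X {0..N}"
      using indep by (simp add: X_def[abs_def])
    show "Measurable.pred (borel \<Otimes>\<^sub>M borel) (\<lambda>(x, y). P j x y)" for j
      by (cases "j = 0") (simp_all add: P_def)
  qed (use i in auto)
  also have "\<dots> = (\<integral>\<^sup>+y. ennreal (cdf (distr M borel C) y * (\<Prod>j\<in>{1..N} - {i}. cdf (distr M borel (A j)) y))
       \<partial>distr M borel (A i))"
    unfolding X_i
  proof (intro nn_integral_cong)
    fix y
    have rv: "random_variable borel (X j)" if "j \<in> {0..N}" for j
      using indep that by (simp add: indep_vars_def X_def)
    have "emeasure (distr M borel (X j)) {x \<in> space borel. P j x y} =
        ennreal (cdf (distr M borel (X j)) y)" if "j \<in> {0..N}" for j
    proof -
      interpret D: real_distribution "distr M borel (X j)"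
        using rv[OF that] by simp
      have "{x \<in> space borel. P j x y} = (if j = 0 then {-y..} else {..y})"
        by (auto simp: P_def)
      then show ?thesis
        using C_symmetric[of y] D.emeasure_atMost_eq_cdf[of y]
        by (cases "j = 0") (simp_all add: X_def)
    qed
    then have "(\<Prod>j\<in>{0..N} - {i}. emeasure (distr M borel (X j)) {x \<in> space borel. P j x y}) =
        ennreal (\<Prod>j\<in>{0..N} - {i}. cdf (distr M borel (X j)) y)"
      by (simp add: prod_ennreal cdf_def)
    also have "(\<Prod>j\<in>{0..N} - {i}. cdf (distr M borel (X j)) y) =
        cdf (distr M borel C) y * (\<Prod>j\<in>{1..N} - {i}. cdf (distr M borel (A j)) y)"
      unfolding others by (auto simp: X_def intro!: prod.cong)
    finally show "(\<Prod>j\<in>{0..N} - {i}. emeasure (distr M borel (X j)) {x \<in> space borel. P j x y}) =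
        ennreal (cdf (distr M borel C) y * (\<Prod>j\<in>{1..N} - {i}. cdf (distr M borel (A j)) y))" .
  qed
  finally show ?thesis .
qed

lemma (in prob_space) prob_common_factor_attains_max:
  fixes C :: "'a \<Rightarrow> real" and A :: "nat \<Rightarrow> 'a \<Rightarrow> real"
  assumes indep: "indep_vars (\<lambda>_. borel) (\<lambda>j. if j = 0 then C else A j) {0..N}"
    and i: "i \<in> {1..N}"
    and C_symmetric: "\<And>y. emeasure (distr M borel C) {-y..} = emeasure (distr M borel C) {..y}"
    and A_i: "distr M borel (A i) = density lborel f" "integrable lborel f" "\<And>x. 0 \<le> f x"
  shows "measure M
      {\<omega> \<in> space M. Max (insert 0 ((\<lambda>j. C \<omega> + A j \<omega>) ` {1..N})) = C \<omega> + A i \<omega>} =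
    (\<integral>x. f x * cdf (distr M borel C) x * (\<Prod>j\<in>{1..N} - {i}. cdf (distr M borel (A j)) x)
       \<partial>lborel)"
proof -
  have rv: "random_variable borel (if j = 0 then C else A j)" if "j \<in> {0..N}" for j
    using indep that by (simp add: indep_vars_def)
  interpret C: real_distribution "distr M borel C"
    using rv[of 0] by simp
  have "real_distribution (distr M borel (A j))" if "j \<in> {1..N} - {i}" for j
    using rv[of j] that by simp
  note cdf_A =
    cdf_product_bounded[where J="{1..N} - {i}" and D="\<lambda>j. distr M borel (A j)", OF this]
  let ?F = "\<lambda>x. cdf (distr M borel C) x * (\<Prod>j\<in>{1..N} - {i}. cdf (distr M borel (A j)) x)"
  have F_meas: "?F \<in> borel_measurable borel"
    using C.borel_measurable_cdf cdf_A(1) by (rule borel_measurable_times)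
  have F_bounds: "0 \<le> ?F x" "?F x \<le> 1" for x
    using C.cdf_nonneg[of x] C.cdf_bounded_prob[of x] cdf_A(2,3)[where x=x]
    by (simp_all add: mult_le_one)
  have "emeasure M
      {\<omega> \<in> space M. Max (insert 0 ((\<lambda>j. C \<omega> + A j \<omega>) ` {1..N})) = C \<omega> + A i \<omega>} =
      (\<integral>\<^sup>+x. ennreal (?F x) \<partial>distr M borel (A i))"
    using indep i C_symmetric by (rule emeasure_common_factor_attains_max)
  also have "\<dots> = ennreal (\<integral>x. f x * ?F x \<partial>lborel)"
    unfolding A_i(1) using A_i F_meas F_bounds by (intro nn_integral_density_eq_integral_bounded) auto
  finally show ?thesis
    using A_i(3) F_bounds by (simp add: measure_def mult.assoc)
qed

lemma Min_power2_mult_less_power2: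
  fixes \<sigma> :: "'i \<Rightarrow> real"
  assumes "finite J" "i \<in> J" "\<sigma> i \<noteq> 0" "0 \<le> \<gamma>" "\<gamma> < 1"
  shows "Min ((\<lambda>j. (\<sigma> j)\<^sup>2) ` J) * \<gamma> < (\<sigma> i)\<^sup>2"
proof -
  have "Min ((\<lambda>j. (\<sigma> j)\<^sup>2) ` J) * \<gamma> \<le> (\<sigma> i)\<^sup>2 * \<gamma>"
    using assms by (intro mult_right_mono) auto
  also have "\<dots> < (\<sigma> i)\<^sup>2"
    using assms by simp
  finally show ?thesis .
qed

theorem lemma6:
  fixes M :: "'a measure"
    and N :: nat
    and \<mu> \<sigma> :: "nat \<Rightarrow> real"
    and \<gamma> :: real
    and C :: "'a \<Rightarrow> real"
    and A :: "nat \<Rightarrow> 'a \<Rightarrow> real"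
    and i :: nat
  defines "\<sigma>min2 \<equiv> Min ((\<lambda>j. (\<sigma> j)\<^sup>2) ` {1..N})"
  assumes "prob_space M"
    and "N \<ge> 1"
    and "\<And>j. j \<in> {1..N} \<Longrightarrow> \<sigma> j > 0"
    and "0 \<le> \<gamma>" and "\<gamma> < 1"
    and "prob_space.indep_vars M (\<lambda>_. borel) (\<lambda>j. if j = 0 then C else A j) {0..N}"
    and "distr M borel C = gauss_measure 0 (\<sigma>min2 * \<bar>\<gamma>\<bar>)"
    and "\<And>j. j \<in> {1..N} \<Longrightarrow>
           distr M borel (A j) = gauss_measure (\<mu> j) ((\<sigma> j)\<^sup>2 - \<sigma>min2 * \<bar>\<gamma>\<bar>)"
    and "i \<in> {1..N}"
  shows "measure M {\<omega> \<in> space M.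
            Max (insert 0 ((\<lambda>j. C \<omega> + A j \<omega>) ` {1..N})) = C \<omega> + A i \<omega>}
         = (\<integral>x. normal_density (\<mu> i) (sqrt ((\<sigma> i)\<^sup>2 - \<sigma>min2 * \<bar>\<gamma>\<bar>)) x
                 * cdf (distr M borel C) x
                 * (\<Prod>j\<in>{1..N} - {i}. cdf (distr M borel (A j)) x) \<partial>lborel)"
proof -
  interpret prob_space M by fact
  let ?v = "(\<sigma> i)\<^sup>2 - \<sigma>min2 * \<bar>\<gamma>\<bar>"
  have "0 \<le> \<sigma>min2 * \<bar>\<gamma>\<bar>"
    unfolding \<sigma>min2_def using \<open>N \<ge> 1\<close> by simp
  have "0 < ?v"
    using Min_power2_mult_less_power2[of "{1..N}" i \<sigma> \<gamma>] assms(4)[OF \<open>i \<in> {1..N}\<close>]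
      \<open>i \<in> {1..N}\<close> \<open>0 \<le> \<gamma>\<close> \<open>\<gamma> < 1\<close>
    by (simp add: \<sigma>min2_def)
  show ?thesis
  proof (rule prob_common_factor_attains_max)
    show "emeasure (distr M borel C) {-y..} = emeasure (distr M borel C) {..y}" for y
      using assms(8) \<open>0 \<le> \<sigma>min2 * \<bar>\<gamma>\<bar>\<close> by (simp add: emeasure_centered_gauss_atLeast_uminus)
    show "distr M borel (A i) = density lborel (normal_density (\<mu> i) (sqrt ?v))"
      using assms(9)[OF \<open>i \<in> {1..N}\<close>] \<open>0 < ?v\<close> by (simp add: gauss_measure_def)
  qed (use assms(7,10) \<open>0 < ?v\<close> in auto)
qed

end
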